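(* Consider the ROSS algorithm described in the context and suppose Assumptions (A1), (A2), (A3) hold. Then for every round $t\ge1$, $$\mathbb{E}\left[\left\|\frac1N\sum_{i=1}^N\bar g^{[t]}_i\right\|^2\right]\le\frac{4\sigma^2}{\omega_{min}^4}+\frac{6\sigma^2}{N}+\frac{16\varsigma^2}{\omega_{min}^4}+\frac{32L^2}{N\omega_{min}^4}\sum_{i=1}^N\mathbb{E}\left[\left\|x^{[t-1]}_i-\bar x^{[t-1]}\right\|^2\right]+\left(\frac{16}{\omega_{min}^4}+6\right)\mathbb{E}\left[\left\|\frac1N\sum_{i=1}^N\nabla f_i\left(x^{[t-1]}_i\right)\right\|^2\right].$$
   Context: Setting: $N\ge1$ agents $\mathcal{N}=\{1,\dots,N\}$. $\mathbf{W}=(\omega_{i,j})\in[0,1]^{N\times N}$ is a symmetric doubly stochastic matrix ($\omega_{i,j}=\omega_{j,i}$, $\sum_{j}\omega_{i,j}=1$). $\mathcal{N}_i=\{j\in\mathcal{N}:\omega_{i,j}>0\}$ is the neighborhood of agent $i$ (the algorithm treats $i$ itself as a member of $\mathcal{N}_i$), and $\omega_{min}=\min_{i\in\mathcal{N},j\in\mathcal{N}_i}\omega_{i,j}$. Agent $i$ has a data distribution $\mathcal{D}_i$; $F(x;\xi)$ is a real-valued loss, differentiable in $x\in\mathbb{R}^d$; $f_i(x)=\mathbb{E}_{\xi\sim\mathcal{D}_i}[F(x;\xi)]$ and $\mathcal{F}(x)=\frac1N\sum_{i=1}^N f_i(x)$. A finite validation set $\mathcal{Q}$ is available to every agent, and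 $J(\xi;x)$ denotes the accuracy of model $x$ on sample $\xi$. Algorithm ROSS (learning rate $\gamma>0$, momentum coefficient $\alpha$): all agents start from a common point $x_i^{[0]}=x^{[0]}$ with $u_i^{[0]}=0$. In each round $t=1,2,\dots$, each agent $i$ draws a sample $\xi_{i,t}\sim\mathcal{D}_i$ (independently across agents and rounds) and for each $j\in\mathcal{N}_i$ computes $g^{[t]}_{i,j}=\nabla F(x^{[t-1]}_j;\xi_{i,t})$. Agent $i$ then sets $x^{[t]}_{i,j}=x^{[t-1]}_i-\gamma g^{[t]}_{j,i}$ for $j\in\mathcal{N}_i$; for $\mathcal{N}'\subseteq\mathcal{N}_i$ it defines $v(\mathcal{N}')=\frac{1}{|\mathcal{Q}|}\sum_{\xi\in\mathcal{Q}}J\big(\xi;\frac{1}{|\mathcal{N}'|}\sum_{j\in\mathcal{N}'}x^{[t]}_{i,j}\big)$ ($v(\emptyset)=0$); Shapley values $\varphi^{[t]}_{i,j}=\sum_{\mathcal{N}'\subseteq\mathcal{N}_i\setminus\{j\}}\frac{v(\mathcal{N}'\cup\{j\})-v(\mathcal{N}')}{|\mathcal{N}_i|\binom{|\mathcal{N}_i|-1}{|\mathcal{N}'|}}$; normalized values $\hat\varphi^{[t]}_{i,j}=\frac{\varphi^{[t]}_{i,j}-\min_{k\in\mathcal{N}_i}\varphi^{[t]}_{i,k}}{\max_{k\in\mathcal{N}_i}\varphi^{[t]}_{i,k}-\min_{k\in\mathcal{N}_i}\varphi^{[t]}_{i,k}}$; weights $\pi^{[t]}_{i,j}=\frac{\hat\varphi^{[t]}_{i,j}}{\omega_{i,j}\sum_{k\in\mathcal{N}_i}\hat\varphi^{[t]}_{i,k}}$;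 then $\bar g^{[t]}_i=\sum_{j\in\mathcal{N}_i}\pi^{[t]}_{i,j}g^{[t]}_{j,i}$, $\hat u^{[t]}_i=\alpha u^{[t-1]}_i+\bar g^{[t]}_i$, $\hat x^{[t]}_i=x^{[t-1]}_i-\gamma\hat u^{[t]}_i$, $u^{[t]}_i=\sum_{j\in\mathcal{N}_i}\omega_{i,j}\hat u^{[t]}_j$, $x^{[t]}_i=\sum_{j\in\mathcal{N}_i}\omega_{i,j}\hat x^{[t]}_j$. Write $\bar x^{[t]}=\frac1N\sum_{i=1}^N x^{[t]}_i$. Expectations are over the random samples. Assumptions: (A1) each $f_i$ is $L$-smooth. (A2) there exist $\sigma>0,\varsigma>0$ with $\mathbb{E}_{\xi\sim\mathcal{D}_i}\|\nabla F(x;\xi)-\nabla f_i(x)\|^2\le\sigma^2$ and $\|\nabla f_i(x)-\nabla\mathcal{F}(x)\|^2\le\varsigma^2$ for all $x$ and all $i$. (A3) with $\lambda_k(\mathbf{W})$ the $k$-th largest eigenvalue of $\mathbf{W}$, $\lambda_1(\mathbf{W})=1$ and $\max\{|\lambda_2(\mathbf{W})|,|\lambda_N(\mathbf{W})|\}\le\sqrt{\rho}$ for some constant $\rho<1$. *)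

theory Defs
  imports "HOL-Probability.Probability" "Jordan_Normal_Form.Char_Poly"
begin

text \<open>Agents are indexed by 1..N; rounds by t = 1, 2, ...  A sample path assigns
  to every pair (round t, agent i) the sample drawn by agent i in round t.\<close>

definition nbhd :: "nat \<Rightarrow> (nat \<Rightarrow> nat \<Rightarrow> real) \<Rightarrow> nat \<Rightarrow> nat set" where
  "nbhd N W i = {j \<in> {1..N}. 0 < W i j}"

text \<open>Neighbourhood as used by the algorithm (agent i always included).\<close>
definition alg_nbhd :: "nat \<Rightarrow> (nat \<Rightarrow> nat \<Rightarrow> real) \<Rightarrow> nat \<Rightarrow> nat set" where
  "alg_nbhd N W i = nbhd N W i \<union> {i}"

definition omega_min :: "nat \<Rightarrow> (nat \<Rightarrow> nat \<Rightarrow> real) \<Rightarrow> real" where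
  "omega_min N W = Min {W i j | i j. i \<in> {1..N} \<and> j \<in> nbhd N W i}"

text \<open>Coalition value v on the validation set Q, for local candidate models y j.\<close>
definition coal_val :: "'s set \<Rightarrow> ('s \<Rightarrow> 'x::real_vector \<Rightarrow> real) \<Rightarrow> (nat \<Rightarrow> 'x) \<Rightarrow> nat set \<Rightarrow> real" where
  "coal_val Q J y S =
     (if S = {} then 0
      else (\<Sum>q\<in>Q. J q ((1 / real (card S)) *\<^sub>R (\<Sum>j\<in>S. y j))) / real (card Q))"

definition shapley :: "(nat set \<Rightarrow> real) \<Rightarrow> nat set \<Rightarrow> nat \<Rightarrow> real" where
  "shapley v A j =
     (\<Sum>S\<in>Pow (A - {j}). (v (S \<union> {j}) - v S) /
         (real (card A) * real ((card A - 1) choose (card S))))"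

text \<open>Aggregated gradient of agent i in a round: x is the vector of models
  x^{[t-1]}, smp j is the sample xi_{j,t} of agent j in this round.\<close>
definition ross_gbar ::
  "nat \<Rightarrow> (nat \<Rightarrow> nat \<Rightarrow> real) \<Rightarrow> real \<Rightarrow> ('x::euclidean_space \<Rightarrow> 's \<Rightarrow> 'x) \<Rightarrow>
   's set \<Rightarrow> ('s \<Rightarrow> 'x \<Rightarrow> real) \<Rightarrow> (nat \<Rightarrow> 'x) \<Rightarrow> (nat \<Rightarrow> 's) \<Rightarrow> nat \<Rightarrow> 'x" where
  "ross_gbar N W \<gamma> gradF Q J x smp i =
    (let A = alg_nbhd N W i;
         g = (\<lambda>j. gradF (x i) (smp j));
         y = (\<lambda>j. x i - \<gamma> *\<^sub>R g j);
         \<phi> = shapley (coal_val Q J y) A;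
         \<phi>h = (\<lambda>j. (\<phi> j - Min (\<phi> ` A)) / (Max (\<phi> ` A) - Min (\<phi> ` A)));
         \<pi> = (\<lambda>j. \<phi>h j / (W i j * (\<Sum>k\<in>A. \<phi>h k)))
     in \<Sum>j\<in>A. \<pi> j *\<^sub>R g j)"

definition ross_step ::
  "nat \<Rightarrow> (nat \<Rightarrow> nat \<Rightarrow> real) \<Rightarrow> real \<Rightarrow> real \<Rightarrow> ('x::euclidean_space \<Rightarrow> 's \<Rightarrow> 'x) \<Rightarrow>
   's set \<Rightarrow> ('s \<Rightarrow> 'x \<Rightarrow> real) \<Rightarrow> (nat \<Rightarrow> 's) \<Rightarrow> (nat \<Rightarrow> 'x) \<times> (nat \<Rightarrow> 'x) \<Rightarrow>
   (nat \<Rightarrow> 'x) \<times> (nat \<Rightarrow> 'x)" where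
  "ross_step N W \<gamma> \<alpha> gradF Q J smp xu =
    (let x = fst xu; u = snd xu;
         gb = ross_gbar N W \<gamma> gradF Q J x smp;
         uh = (\<lambda>i. \<alpha> *\<^sub>R u i + gb i);
         xh = (\<lambda>i. x i - \<gamma> *\<^sub>R uh i)
     in ((\<lambda>i. \<Sum>j\<in>alg_nbhd N W i. W i j *\<^sub>R xh j),
         (\<lambda>i. \<Sum>j\<in>alg_nbhd N W i. W i j *\<^sub>R uh j)))"

primrec ross_state ::
  "nat \<Rightarrow> (nat \<Rightarrow> nat \<Rightarrow> real) \<Rightarrow> real \<Rightarrow> real \<Rightarrow> ('x::euclidean_space \<Rightarrow> 's \<Rightarrow> 'x) \<Rightarrow>
   's set \<Rightarrow> ('s \<Rightarrow> 'x \<Rightarrow> real) \<Rightarrow> 'x \<Rightarrow> (nat \<times> nat \<Rightarrow> 's) \<Rightarrow> nat \<Rightarrow>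
   (nat \<Rightarrow> 'x) \<times> (nat \<Rightarrow> 'x)" where
  "ross_state N W \<gamma> \<alpha> gradF Q J x0 \<xi> 0 = ((\<lambda>i. x0), (\<lambda>i. 0))"
| "ross_state N W \<gamma> \<alpha> gradF Q J x0 \<xi> (Suc t) =
     ross_step N W \<gamma> \<alpha> gradF Q J (\<lambda>j. \<xi> (Suc t, j))
       (ross_state N W \<gamma> \<alpha> gradF Q J x0 \<xi> t)"

text \<open>Assumption (A3): the eigenvalues of W, listed with multiplicity in
  decreasing order lam 1 \<ge> ... \<ge> lam N, satisfy lam 1 = 1 and all
  non-leading ones have modulus at most sqrt rho.\<close>
definition spectral_gap :: "nat \<Rightarrow> (nat \<Rightarrow> nat \<Rightarrow> real) \<Rightarrow> real \<Rightarrow> bool" where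
  "spectral_gap N W \<rho> \<longleftrightarrow>
     (\<exists>lam :: nat \<Rightarrow> real.
        (\<forall>k. 1 \<le> k \<and> k < N \<longrightarrow> lam (Suc k) \<le> lam k) \<and>
        char_poly (mat N N (\<lambda>(i, j). W (Suc i) (Suc j))) = (\<Prod>k\<in>{1..N}. [:- lam k, 1:]) \<and>
        lam 1 = 1 \<and>
        (\<forall>k\<in>{2..N}. \<bar>lam k\<bar> \<le> sqrt \<rho>))"

end

theory Submission
  imports Defs
begin

(* Each aggregated gradient gbar_i is a nonnegative combination sum_j pi_j g_(j,i) of the
   stochastic gradients g_(j,i) = grad F(x_i; xi_j) of the neighbours, with sum_j w_(i,j) pi_j <= 1,
   because min-max normalised Shapley values are nonnegative and are divided by their sum.
   Since w_(i,j) >= omega_min, the weights add up to at most 1/omega_min, hence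
   |gbar_i|^2 <= omega_min^-2 sum_j |g_(j,i)|^2.  Each g_(j,i) splits into sampling noise, whose
   second moment is at most sigma^2 because xi_(j,t) is independent of x^[t-1], and grad f_j(x_i),
   which heterogeneity, L-smoothness and the distance of x_i to the average control.  Every
   neighbourhood has at most 1/omega_min members.  This gives the bound with omega_min^-3, and
   omega_min <= 1 turns it into the stated one. *)

definition avg :: "nat \<Rightarrow> (nat \<Rightarrow> 'a::real_vector) \<Rightarrow> 'a" where
  "avg N v = (1 / real N) *\<^sub>R (\<Sum>i\<in>{1..N}. v i)"

lemma norm_sum_scaleR_le:
  fixes v :: "'a \<Rightarrow> 'b::real_normed_vector"
  assumes "\<And>j. j \<in> A \<Longrightarrow> 0 \<le> c j" and "\<And>j. j \<in> A \<Longrightarrow> norm (v j) \<le> B"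
  shows "norm (\<Sum>j\<in>A. c j *\<^sub>R v j) \<le> sum c A * B"
proof -
  have "norm (\<Sum>j\<in>A. c j *\<^sub>R v j) \<le> (\<Sum>j\<in>A. c j * norm (v j))"
    using norm_sum[of "\<lambda>j. c j *\<^sub>R v j" A] assms(1) by (simp cong: sum.cong)
  also have "\<dots> \<le> (\<Sum>j\<in>A. c j * B)"
    using assms by (intro sum_mono mult_left_mono) auto
  finally show ?thesis by (simp add: sum_distrib_right)
qed

lemma power2_norm_add_le:
  fixes a b :: "'a::real_normed_vector"
  shows "(norm (a + b))\<^sup>2 \<le> 2 * ((norm a)\<^sup>2 + (norm b)\<^sup>2)"
proof -
  have "(norm (a + b))\<^sup>2 \<le> (norm a + norm b)\<^sup>2"
    by (intro power_mono norm_triangle_ineq) simp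
  also have "\<dots> \<le> 2 * ((norm a)\<^sup>2 + (norm b)\<^sup>2)"
    using zero_le_power2[of "norm a - norm b"] by (simp add: power2_eq_square algebra_simps)
  finally show ?thesis .
qed

lemma power2_norm_add4_le:
  fixes a b c d :: "'a::real_normed_vector"
  shows "(norm (a + b + c + d))\<^sup>2 \<le> 4 * ((norm a)\<^sup>2 + (norm b)\<^sup>2 + (norm c)\<^sup>2 + (norm d)\<^sup>2)"
proof -
  have "(norm ((a + b) + (c + d)))\<^sup>2 \<le> 2 * ((norm (a + b))\<^sup>2 + (norm (c + d))\<^sup>2)"
    by (rule power2_norm_add_le)
  also have "\<dots> \<le> 2 * (2 * ((norm a)\<^sup>2 + (norm b)\<^sup>2) + 2 * ((norm c)\<^sup>2 + (norm d)\<^sup>2))"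
    by (intro mult_left_mono add_mono power2_norm_add_le) simp_all
  finally show ?thesis by (simp add: add.assoc)
qed

lemma power2_norm_sum_le:
  fixes v :: "'a \<Rightarrow> 'b::real_normed_vector"
  shows "(norm (\<Sum>j\<in>A. v j))\<^sup>2 \<le> real (card A) * (\<Sum>j\<in>A. (norm (v j))\<^sup>2)"
proof -
  have "(norm (\<Sum>j\<in>A. v j))\<^sup>2 \<le> (\<Sum>j\<in>A. norm (v j))\<^sup>2"
    by (intro power_mono norm_sum) simp
  also have "\<dots> \<le> real (card A) * (\<Sum>j\<in>A. (norm (v j))\<^sup>2)"
    using sum_squared_le_sum_of_squares[of "\<lambda>j. norm (v j)" A] by (simp add: mult.commute)
  finally show ?thesis .
qed

lemma power2_norm_avg_le:
  fixes v :: "nat \<Rightarrow> 'a::real_normed_vector"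
  shows "(norm (avg N v))\<^sup>2 \<le> (\<Sum>i\<in>{1..N}. (norm (v i))\<^sup>2) / real N"
proof (cases "N = 0")
  case False
  have "(norm (avg N v))\<^sup>2 = (norm (\<Sum>i\<in>{1..N}. v i))\<^sup>2 / (real N)\<^sup>2"
    by (simp add: avg_def power_divide)
  also have "\<dots> \<le> real N * (\<Sum>i\<in>{1..N}. (norm (v i))\<^sup>2) / (real N)\<^sup>2"
    using power2_norm_sum_le[of v "{1..N}"] by (simp add: divide_right_mono)
  also have "\<dots> = (\<Sum>i\<in>{1..N}. (norm (v i))\<^sup>2) / real N"
    using False by (simp add: power2_eq_square)
  finally show ?thesis .
qed (simp add: avg_def)

lemma divide_power_le_divide_power:
  fixes w c :: real
  assumes "0 < w" and "w \<le> 1" and "0 \<le> c" and "m \<le> n"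
  shows "c / w ^ m \<le> c / w ^ n"
  using assms by (intro divide_left_mono power_decreasing) simp_all

lemma omega_min_bounds:
  fixes W :: "nat \<Rightarrow> nat \<Rightarrow> real"
  assumes N: "1 \<le> N"
    and W_range: "\<forall>i\<in>{1..N}. \<forall>j\<in>{1..N}. 0 \<le> W i j \<and> W i j \<le> 1"
    and W_stoch: "\<forall>i\<in>{1..N}. (\<Sum>j\<in>{1..N}. W i j) = 1"
  shows omega_min_pos: "0 < omega_min N W"
    and omega_min_le_one: "omega_min N W \<le> 1"
    and omega_min_le_weight: "\<And>i j. i \<in> {1..N} \<Longrightarrow> j \<in> nbhd N W i \<Longrightarrow> omega_min N W \<le> W i j"
proof -
  define S where "S = {W i j | i j. i \<in> {1..N} \<and> j \<in> nbhd N W i}"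
  have wS: "omega_min N W = Min S"
    by (simp add: omega_min_def S_def)
  have "S \<subseteq> (\<lambda>(i, j). W i j) ` ({1..N} \<times> {1..N})"
    by (auto simp: S_def nbhd_def)
  then have finS: "finite S"
    by (rule finite_subset) auto
  have S_pos: "\<And>v. v \<in> S \<Longrightarrow> 0 < v \<and> v \<le> 1"
    using W_range by (auto simp: S_def nbhd_def)
  obtain j where "j \<in> {1..N}" "0 < W 1 j"
  proof -
    have "(\<Sum>j\<in>{1..N}. W 1 j) \<noteq> 0"
      using W_stoch N by auto
    then obtain j where j: "j \<in> {1..N}" and "W 1 j \<noteq> 0"
      by (meson sum.neutral)
    moreover have "0 \<le> W 1 j"
      using W_range N j by simp
    ultimately show ?thesis
      by (intro that[OF j]) simp
  qed
  with N have "W 1 j \<in> S"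
    unfolding S_def nbhd_def by fastforce
  then have neS: "S \<noteq> {}"
    by auto
  show "0 < omega_min N W"
    using finS neS S_pos by (simp add: wS)
  show "omega_min N W \<le> 1"
    using Min_in[OF finS neS] S_pos by (simp add: wS)
  show "omega_min N W \<le> W i j" if "i \<in> {1..N}" "j \<in> nbhd N W i" for i j
    using that finS by (auto simp: wS S_def intro!: Min_le)
qed

lemma card_nbhd_le:
  fixes W :: "nat \<Rightarrow> nat \<Rightarrow> real"
  assumes N: "1 \<le> N"
    and W_range: "\<forall>i\<in>{1..N}. \<forall>j\<in>{1..N}. 0 \<le> W i j \<and> W i j \<le> 1"
    and W_stoch: "\<forall>i\<in>{1..N}. (\<Sum>j\<in>{1..N}. W i j) = 1"
    and i: "i \<in> {1..N}"
  shows "real (card (nbhd N W i)) \<le> 1 / omega_min N W"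
proof -
  have "real (card (nbhd N W i)) * omega_min N W \<le> (\<Sum>j\<in>nbhd N W i. W i j)"
    using omega_min_le_weight[OF N W_range W_stoch i]
      sum_mono[of "nbhd N W i" "\<lambda>_. omega_min N W" "W i"] by simp
  also have "\<dots> \<le> (\<Sum>j\<in>{1..N}. W i j)"
    using W_range i by (intro sum_mono2) (auto simp: nbhd_def)
  finally show ?thesis
    using W_stoch i omega_min_pos[OF N W_range W_stoch] by (simp add: field_simps)
qed

lemma minmax_normalized_nonneg:
  fixes \<phi> :: "'a \<Rightarrow> real"
  assumes "finite A" and "j \<in> A"
  shows "0 \<le> (\<phi> j - Min (\<phi> ` A)) / (Max (\<phi> ` A) - Min (\<phi> ` A))"
proof -
  have "Min (\<phi> ` A) \<le> \<phi> j" "\<phi> j \<le> Max (\<phi> ` A)"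
    using assms by auto
  then show ?thesis
    by simp
qed

lemma ross_gbar_conic_combination:
  assumes "i \<in> {1..N}" and "0 \<le> W i i"
  obtains \<pi> where "ross_gbar N W \<gamma> gradF Q J x smp i = (\<Sum>j\<in>nbhd N W i. \<pi> j *\<^sub>R gradF (x i) (smp j))"
    and "\<And>j. j \<in> nbhd N W i \<Longrightarrow> 0 \<le> \<pi> j"
    and "(\<Sum>j\<in>nbhd N W i. W i j * \<pi> j) \<le> 1"
proof -
  define A where "A = alg_nbhd N W i"
  define \<phi> where "\<phi> = shapley (coal_val Q J (\<lambda>j. x i - \<gamma> *\<^sub>R gradF (x i) (smp j))) A"
  define \<phi>h where "\<phi>h j = (\<phi> j - Min (\<phi> ` A)) / (Max (\<phi> ` A) - Min (\<phi> ` A))" for j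
  define \<pi> where "\<pi> j = \<phi>h j / (W i j * sum \<phi>h A)" for j
  have finA: "finite A" and nbA: "nbhd N W i \<subseteq> A"
    by (auto simp: A_def alg_nbhd_def nbhd_def)
  have \<phi>h_nonneg: "0 \<le> \<phi>h j" if "j \<in> A" for j
    unfolding \<phi>h_def using finA that by (rule minmax_normalized_nonneg)
  then have sum_nonneg: "0 \<le> sum \<phi>h A"
    by (simp add: sum_nonneg)
  have W_pos: "0 < W i j" if "j \<in> nbhd N W i" for j
    using that by (simp add: nbhd_def)
  have "ross_gbar N W \<gamma> gradF Q J x smp i = (\<Sum>j\<in>A. \<pi> j *\<^sub>R gradF (x i) (smp j))"
    by (simp add: ross_gbar_def Let_def A_def \<phi>_def \<phi>h_def \<pi>_def)
  \<comment> \<open>If agent i is not its own neighbour then W i i = 0, and dividing by it gives weight 0.\<close>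
  also have "\<dots> = (\<Sum>j\<in>nbhd N W i. \<pi> j *\<^sub>R gradF (x i) (smp j))"
    using assms by (intro sum.mono_neutral_right[OF finA nbA])
      (auto simp: A_def alg_nbhd_def nbhd_def \<pi>_def)
  finally have gbar: "ross_gbar N W \<gamma> gradF Q J x smp i = (\<Sum>j\<in>nbhd N W i. \<pi> j *\<^sub>R gradF (x i) (smp j))" .
  show ?thesis
  proof (rule that[OF gbar])
    show "0 \<le> \<pi> j" if "j \<in> nbhd N W i" for j
      using \<phi>h_nonneg W_pos[OF that] nbA that sum_nonneg by (auto simp: \<pi>_def)
    have "(\<Sum>j\<in>nbhd N W i. W i j * \<pi> j) = (\<Sum>j\<in>nbhd N W i. \<phi>h j) / sum \<phi>h A"
      unfolding sum_divide_distrib by (intro sum.cong) (auto simp: \<pi>_def dest: W_pos)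
    also have "\<dots> \<le> 1"
    proof -
      have "(\<Sum>j\<in>nbhd N W i. \<phi>h j) \<le> sum \<phi>h A"
        using finA nbA \<phi>h_nonneg by (intro sum_mono2) auto
      then show ?thesis
        using sum_nonneg by (cases "sum \<phi>h A = 0") simp_all
    qed
    finally show "(\<Sum>j\<in>nbhd N W i. W i j * \<pi> j) \<le> 1" .
  qed
qed

lemma power2_norm_ross_gbar_le:
  assumes "i \<in> {1..N}" and "0 \<le> W i i" and w: "0 < w" and w_le: "\<And>j. j \<in> nbhd N W i \<Longrightarrow> w \<le> W i j"
  shows "(norm (ross_gbar N W \<gamma> gradF Q J x smp i))\<^sup>2
    \<le> (\<Sum>j\<in>nbhd N W i. (norm (gradF (x i) (smp j)))\<^sup>2) / w\<^sup>2"
proof -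
  define B where "B = sqrt (\<Sum>j\<in>nbhd N W i. (norm (gradF (x i) (smp j)))\<^sup>2)"
  obtain \<pi> where gbar: "ross_gbar N W \<gamma> gradF Q J x smp i = (\<Sum>j\<in>nbhd N W i. \<pi> j *\<^sub>R gradF (x i) (smp j))"
    and \<pi>_nonneg: "\<And>j. j \<in> nbhd N W i \<Longrightarrow> 0 \<le> \<pi> j"
    and \<pi>_sum: "(\<Sum>j\<in>nbhd N W i. W i j * \<pi> j) \<le> 1"
    using ross_gbar_conic_combination[where W = W and i = i, OF assms(1,2), of \<gamma> gradF Q J x smp] by blast
  have fin: "finite (nbhd N W i)"
    by (simp add: nbhd_def)
  have g_le: "norm (gradF (x i) (smp j)) \<le> B" if "j \<in> nbhd N W i" for j
    using member_le_sum[OF that, of "\<lambda>j. (norm (gradF (x i) (smp j)))\<^sup>2", OF _ fin]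
    by (simp add: B_def real_le_rsqrt)
  have "w * sum \<pi> (nbhd N W i) \<le> (\<Sum>j\<in>nbhd N W i. W i j * \<pi> j)"
    unfolding sum_distrib_left using w_le \<pi>_nonneg by (intro sum_mono mult_right_mono)
  with \<pi>_sum w have \<pi>_le: "sum \<pi> (nbhd N W i) \<le> 1 / w"
    by (simp add: field_simps)
  have "norm (ross_gbar N W \<gamma> gradF Q J x smp i) \<le> sum \<pi> (nbhd N W i) * B"
    unfolding gbar using \<pi>_nonneg g_le by (rule norm_sum_scaleR_le)
  also have "\<dots> \<le> B / w"
    using mult_right_mono[OF \<pi>_le, of B] by (simp add: B_def sum_nonneg)
  finally have "(norm (ross_gbar N W \<gamma> gradF Q J x smp i))\<^sup>2 \<le> (B / w)\<^sup>2"
    by (intro power_mono) simp_all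
  then show ?thesis
    by (simp add: B_def power_divide sum_nonneg)
qed

lemma avg_diff: "avg N u - avg N v = avg N (\<lambda>i. u i - v i)"
  by (simp add: avg_def sum_subtractf scaleR_diff_right)

locale ross_problem =
  fixes N :: nat and W :: "nat \<Rightarrow> nat \<Rightarrow> real"
    and gradf :: "nat \<Rightarrow> 'x::euclidean_space \<Rightarrow> 'x" and L \<sigma>h :: real
  assumes N_pos: "1 \<le> N"
    and W_range: "\<forall>i\<in>{1..N}. \<forall>j\<in>{1..N}. 0 \<le> W i j \<and> W i j \<le> 1"
    and W_stoch: "\<forall>i\<in>{1..N}. (\<Sum>j\<in>{1..N}. W i j) = 1"
    and lipschitz: "\<forall>i\<in>{1..N}. \<forall>x y. norm (gradf i x - gradf i y) \<le> L * norm (x - y)"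
    and heterogeneity: "\<forall>i\<in>{1..N}. \<forall>x.
      (norm (gradf i x - (1 / real N) *\<^sub>R (\<Sum>k\<in>{1..N}. gradf k x)))\<^sup>2 \<le> \<sigma>h\<^sup>2"
begin

lemmas omega_min_pos = omega_min_pos[OF N_pos W_range W_stoch]
  and omega_min_le_one = omega_min_le_one[OF N_pos W_range W_stoch]
  and omega_min_le_weight = omega_min_le_weight[OF N_pos W_range W_stoch]
  and card_nbhd_le = card_nbhd_le[OF N_pos W_range W_stoch]

lemma power2_norm_gradf_diff_le:
  assumes "k \<in> {1..N}"
  shows "(norm (gradf k x - gradf k y))\<^sup>2 \<le> L\<^sup>2 * (norm (x - y))\<^sup>2"
proof -
  have "norm (gradf k x - gradf k y) \<le> L * norm (x - y)"
    using lipschitz assms by blast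
  then have "(norm (gradf k x - gradf k y))\<^sup>2 \<le> (L * norm (x - y))\<^sup>2"
    by (intro power_mono) simp_all
  then show ?thesis
    by (simp add: power_mult_distrib)
qed

lemma gradf_measurable:
  assumes "k \<in> {1..N}"
  shows "gradf k \<in> borel_measurable borel"
proof -
  have "\<bar>L\<bar>-lipschitz_on UNIV (gradf k)"
  proof (rule lipschitz_onI)
    fix x y :: 'x
    have "norm (gradf k x - gradf k y) \<le> L * norm (x - y)"
      using lipschitz assms by blast
    then show "dist (gradf k x) (gradf k y) \<le> \<bar>L\<bar> * dist x y"
      by (simp add: dist_norm) (smt (verit) mult_right_mono norm_ge_zero)
  qed simp
  then show ?thesis
    by (intro borel_measurable_continuous_onI lipschitz_on_continuous_on)
qed

\<comment> \<open>One term per summand of grad f_j(x_i) = (grad f_j - grad F)(x_i) + (grad F(x_i) - grad F(avg x))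
  + (grad F(avg x) - avg_k grad f_k(x_k)) + avg_k grad f_k(x_k), with grad F the average of the grad f_k.\<close>
definition grad_budget :: "(nat \<Rightarrow> 'x) \<Rightarrow> nat \<Rightarrow> real" where
  "grad_budget x i = \<sigma>h\<^sup>2 + L\<^sup>2 * (norm (x i - avg N x))\<^sup>2
     + L\<^sup>2 * (\<Sum>k\<in>{1..N}. (norm (x k - avg N x))\<^sup>2) / real N
     + (norm (avg N (\<lambda>k. gradf k (x k))))\<^sup>2"

lemma power2_norm_gradf_le:
  assumes i: "i \<in> {1..N}" and j: "j \<in> {1..N}"
  shows "(norm (gradf j (x i)))\<^sup>2 \<le> 4 * grad_budget x i"
proof -
  define xb where "xb = avg N x"
  define Fg where "Fg y = avg N (\<lambda>k. gradf k y)" for y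
  define G where "G = avg N (\<lambda>k. gradf k (x k))"
  have het: "(norm (gradf j (x i) - Fg (x i)))\<^sup>2 \<le> \<sigma>h\<^sup>2"
    using heterogeneity j by (simp add: Fg_def avg_def)
  have local: "(norm (Fg (x i) - Fg xb))\<^sup>2 \<le> L\<^sup>2 * (norm (x i - xb))\<^sup>2"
  proof -
    have "(norm (Fg (x i) - Fg xb))\<^sup>2 \<le> (\<Sum>k\<in>{1..N}. (norm (gradf k (x i) - gradf k xb))\<^sup>2) / real N"
      unfolding Fg_def avg_diff by (rule power2_norm_avg_le)
    also have "\<dots> \<le> (\<Sum>k\<in>{1..N}. L\<^sup>2 * (norm (x i - xb))\<^sup>2) / real N"
      by (intro divide_right_mono sum_mono power2_norm_gradf_diff_le) simp_all
    also have "\<dots> = L\<^sup>2 * (norm (x i - xb))\<^sup>2"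
      using N_pos by simp
    finally show ?thesis .
  qed
  have consensus: "(norm (Fg xb - G))\<^sup>2 \<le> L\<^sup>2 * (\<Sum>k\<in>{1..N}. (norm (x k - xb))\<^sup>2) / real N"
  proof -
    have "(norm (Fg xb - G))\<^sup>2 \<le> (\<Sum>k\<in>{1..N}. (norm (gradf k xb - gradf k (x k)))\<^sup>2) / real N"
      unfolding Fg_def G_def avg_diff by (rule power2_norm_avg_le)
    also have "\<dots> \<le> (\<Sum>k\<in>{1..N}. L\<^sup>2 * (norm (x k - xb))\<^sup>2) / real N"
      by (intro divide_right_mono sum_mono) (metis norm_minus_commute power2_norm_gradf_diff_le, simp)
    finally show ?thesis
      by (simp add: sum_distrib_left)
  qed
  have "gradf j (x i) = (gradf j (x i) - Fg (x i)) + (Fg (x i) - Fg xb) + (Fg xb - G) + G"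
    by simp
  then have "(norm (gradf j (x i)))\<^sup>2 \<le> 4 * ((norm (gradf j (x i) - Fg (x i)))\<^sup>2
      + (norm (Fg (x i) - Fg xb))\<^sup>2 + (norm (Fg xb - G))\<^sup>2 + (norm G)\<^sup>2)"
    by (metis power2_norm_add4_le)
  also have "\<dots> \<le> 4 * grad_budget x i"
    using het local consensus by (simp add: grad_budget_def xb_def G_def)
  finally show ?thesis .
qed

lemma grad_budget_nonneg: "0 \<le> grad_budget x i"
  by (simp add: grad_budget_def sum_nonneg)

lemma sum_grad_budget:
  "(\<Sum>i\<in>{1..N}. grad_budget x i) = real N * \<sigma>h\<^sup>2
     + 2 * L\<^sup>2 * (\<Sum>k\<in>{1..N}. (norm (x k - avg N x))\<^sup>2)
     + real N * (norm (avg N (\<lambda>k. gradf k (x k))))\<^sup>2"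
  using N_pos by (simp add: grad_budget_def sum.distrib flip: sum_distrib_left)

lemma power2_norm_ross_gbar_le_budget:
  assumes i: "i \<in> {1..N}"
  shows "(norm (ross_gbar N W \<gamma> gradF Q J x smp i))\<^sup>2
    \<le> (2 * (\<Sum>j\<in>nbhd N W i. (norm (gradF (x i) (smp j) - gradf j (x i)))\<^sup>2)
        + 8 * grad_budget x i / omega_min N W) / (omega_min N W)\<^sup>2"
proof -
  let ?w = "omega_min N W"
  let ?noise = "\<lambda>j. (norm (gradF (x i) (smp j) - gradf j (x i)))\<^sup>2"
  have "(norm (ross_gbar N W \<gamma> gradF Q J x smp i))\<^sup>2
      \<le> (\<Sum>j\<in>nbhd N W i. (norm (gradF (x i) (smp j)))\<^sup>2) / ?w\<^sup>2"
    using i W_range omega_min_pos omega_min_le_weight[OF i]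
    by (intro power2_norm_ross_gbar_le) simp_all
  also have "\<dots> \<le> (\<Sum>j\<in>nbhd N W i. 2 * ?noise j + 8 * grad_budget x i) / ?w\<^sup>2"
  proof (intro divide_right_mono sum_mono)
    fix j assume "j \<in> nbhd N W i"
    then have j: "j \<in> {1..N}"
      by (simp add: nbhd_def)
    have "(norm ((gradF (x i) (smp j) - gradf j (x i)) + gradf j (x i)))\<^sup>2
        \<le> 2 * (?noise j + (norm (gradf j (x i)))\<^sup>2)"
      by (rule power2_norm_add_le)
    then show "(norm (gradF (x i) (smp j)))\<^sup>2 \<le> 2 * ?noise j + 8 * grad_budget x i"
      using power2_norm_gradf_le[OF i j, of x] by simp
  qed simp
  also have "\<dots> = (2 * sum ?noise (nbhd N W i) + real (card (nbhd N W i)) * (8 * grad_budget x i)) / ?w\<^sup>2"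
    by (simp add: sum.distrib sum_distrib_left)
  also have "\<dots> \<le> (2 * sum ?noise (nbhd N W i) + 8 * grad_budget x i / ?w) / ?w\<^sup>2"
    using mult_right_mono[OF card_nbhd_le[OF i], of "8 * grad_budget x i"] grad_budget_nonneg[of x i]
    by (intro divide_right_mono) simp_all
  finally show ?thesis .
qed

lemma power2_norm_avg_ross_gbar_le:
  "(norm (avg N (ross_gbar N W \<gamma> gradF Q J x smp)))\<^sup>2
    \<le> 2 / (real N * (omega_min N W)\<^sup>2)
        * (\<Sum>i\<in>{1..N}. \<Sum>j\<in>nbhd N W i. (norm (gradF (x i) (smp j) - gradf j (x i)))\<^sup>2)
      + 8 * \<sigma>h\<^sup>2 / omega_min N W ^ 3
      + 16 * L\<^sup>2 / (real N * omega_min N W ^ 3) * (\<Sum>i\<in>{1..N}. (norm (x i - avg N x))\<^sup>2)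
      + 8 / omega_min N W ^ 3 * (norm (avg N (\<lambda>k. gradf k (x k))))\<^sup>2"
proof -
  let ?w = "omega_min N W"
  let ?noise = "\<lambda>i. \<Sum>j\<in>nbhd N W i. (norm (gradF (x i) (smp j) - gradf j (x i)))\<^sup>2"
  have "(norm (avg N (ross_gbar N W \<gamma> gradF Q J x smp)))\<^sup>2
      \<le> (\<Sum>i\<in>{1..N}. (norm (ross_gbar N W \<gamma> gradF Q J x smp i))\<^sup>2) / real N"
    by (rule power2_norm_avg_le)
  also have "\<dots> \<le> (\<Sum>i\<in>{1..N}. (2 * ?noise i + 8 * grad_budget x i / ?w) / ?w\<^sup>2) / real N"
    by (intro divide_right_mono sum_mono power2_norm_ross_gbar_le_budget) simp_all
  also have "\<dots> = (\<Sum>i\<in>{1..N}. 2 / (real N * ?w\<^sup>2) * ?noise i + 8 / (real N * ?w ^ 3) * grad_budget x i)"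
  proof -
    have "(2 * n + 8 * b / ?w) / ?w\<^sup>2 / real N = 2 / (real N * ?w\<^sup>2) * n + 8 / (real N * ?w ^ 3) * b"
      for n b :: real
      using omega_min_pos N_pos by (simp add: field_simps power2_eq_square power3_eq_cube)
    then show ?thesis
      by (simp add: sum_divide_distrib)
  qed
  also have "\<dots> = 2 / (real N * ?w\<^sup>2) * sum ?noise {1..N}
      + 8 / (real N * ?w ^ 3) * (\<Sum>i\<in>{1..N}. grad_budget x i)"
    by (simp add: sum.distrib sum_distrib_left)
  also have "\<dots> = 2 / (real N * ?w\<^sup>2) * sum ?noise {1..N}
      + 8 * \<sigma>h\<^sup>2 / ?w ^ 3
      + 16 * L\<^sup>2 / (real N * ?w ^ 3) * (\<Sum>i\<in>{1..N}. (norm (x i - avg N x))\<^sup>2)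
      + 8 / ?w ^ 3 * (norm (avg N (\<lambda>k. gradf k (x k))))\<^sup>2"
    unfolding sum_grad_budget using N_pos omega_min_pos by (simp add: field_simps)
  finally show ?thesis .
qed

end

lemma ross_state_cong:
  assumes "\<And>s' k. s' \<le> s \<Longrightarrow> \<xi> (s', k) = \<xi>' (s', k)"
  shows "ross_state N W \<gamma> \<alpha> gradF Q J x0 \<xi> s = ross_state N W \<gamma> \<alpha> gradF Q J x0 \<xi>' s"
  using assms
proof (induction s)
  case (Suc s)
  then have "(\<lambda>j. \<xi> (Suc s, j)) = (\<lambda>j. \<xi>' (Suc s, j))"
    by simp
  with Suc show ?case
    by simp
qed simp

lemma measurable_ross_gbar:
  fixes gradF :: "'x::euclidean_space \<Rightarrow> 's \<Rightarrow> 'x"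
  assumes Q: "finite Q" and J: "\<forall>q\<in>Q. J q \<in> borel_measurable borel"
    and x: "(\<lambda>\<omega>. x \<omega> i) \<in> borel_measurable M"
    and g: "\<And>j. j \<in> alg_nbhd N W i \<Longrightarrow> (\<lambda>\<omega>. gradF (x \<omega> i) (smp \<omega> j)) \<in> borel_measurable M"
  shows "(\<lambda>\<omega>. ross_gbar N W \<gamma> gradF Q J (x \<omega>) (smp \<omega>) i) \<in> borel_measurable M"
proof -
  define A where "A = alg_nbhd N W i"
  define y where "y \<omega> j = x \<omega> i - \<gamma> *\<^sub>R gradF (x \<omega> i) (smp \<omega> j)" for \<omega> j
  define \<phi> where "\<phi> \<omega> = shapley (coal_val Q J (y \<omega>)) A" for \<omega>
  define \<phi>h where "\<phi>h \<omega> j = (\<phi> \<omega> j - Min (\<phi> \<omega> ` A)) / (Max (\<phi> \<omega> ` A) - Min (\<phi> \<omega> ` A))" for \<omega> j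
  have finA: "finite A"
    by (simp add: A_def alg_nbhd_def nbhd_def)
  have y: "(\<lambda>\<omega>. y \<omega> j) \<in> borel_measurable M" if "j \<in> A" for j
    using g[of j] x that by (simp add: y_def A_def)
  have v: "(\<lambda>\<omega>. coal_val Q J (y \<omega>) S) \<in> borel_measurable M" if "S \<subseteq> A" for S
  proof -
    have "(\<lambda>\<omega>. (1 / real (card S)) *\<^sub>R (\<Sum>j\<in>S. y \<omega> j)) \<in> borel_measurable M"
      using y that by (intro borel_measurable_scaleR borel_measurable_const borel_measurable_sum) auto
    then have "(\<lambda>\<omega>. J q ((1 / real (card S)) *\<^sub>R (\<Sum>j\<in>S. y \<omega> j))) \<in> borel_measurable M" if "q \<in> Q" for q
      using J that by (metis measurable_compose)
    then show ?thesis
      unfolding coal_val_def by (cases "S = {}") (auto intro!: borel_measurable_divide borel_measurable_sum)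
  qed
  have \<phi>: "(\<lambda>\<omega>. \<phi> \<omega> j) \<in> borel_measurable M" if "j \<in> A" for j
    unfolding \<phi>_def shapley_def using finA that
    by (intro borel_measurable_sum borel_measurable_divide borel_measurable_diff borel_measurable_const)
      (auto intro!: v)
  have "(\<lambda>\<omega>. Min (\<phi> \<omega> ` A)) \<in> borel_measurable M" "(\<lambda>\<omega>. Max (\<phi> \<omega> ` A)) \<in> borel_measurable M"
    using borel_measurable_Min[OF finA \<phi>] borel_measurable_Max[OF finA \<phi>] by simp_all
  then have \<phi>h: "(\<lambda>\<omega>. \<phi>h \<omega> j) \<in> borel_measurable M" if "j \<in> A" for j
    unfolding \<phi>h_def using \<phi>[OF that] by (intro borel_measurable_divide borel_measurable_diff)
  have "(\<lambda>\<omega>. \<Sum>j\<in>A. (\<phi>h \<omega> j / (W i j * (\<Sum>k\<in>A. \<phi>h \<omega> k))) *\<^sub>R gradF (x \<omega> i) (smp \<omega> j))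
      \<in> borel_measurable M"
    using \<phi>h g unfolding A_def
    by (intro borel_measurable_sum borel_measurable_scaleR borel_measurable_divide
        borel_measurable_times borel_measurable_const) auto
  then show ?thesis
    unfolding ross_gbar_def Let_def \<phi>h_def \<phi>_def y_def A_def by simp
qed

lemma nn_integral_PiM_update:
  fixes M :: "'i \<Rightarrow> 'a measure"
  assumes M: "\<And>k. k \<in> I \<Longrightarrow> prob_space (M k)" and i: "i \<in> I"
    and f: "f \<in> borel_measurable (PiM I M)"
  shows "(\<integral>\<^sup>+\<omega>. f \<omega> \<partial>PiM I M) = (\<integral>\<^sup>+X. (\<integral>\<^sup>+x. f (X(i := x)) \<partial>M i) \<partial>PiM (I - {i}) M)"
proof -
  have I: "insert i (I - {i}) = I"
    using i by auto
  interpret Mi: prob_space "M i"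
    using M i by blast
  interpret P0: prob_space "PiM (I - {i}) M"
    using M by (intro prob_space_PiM) auto
  interpret pair_sigma_finite "M i" "PiM (I - {i}) M"
    by unfold_locales
  have update_meas: "(\<lambda>(x, X). X(i := x)) \<in> measurable (M i \<Otimes>\<^sub>M PiM (I - {i}) M) (PiM I M)"
    by (subst I[symmetric]) measurable
  have "PiM I M = distr (M i \<Otimes>\<^sub>M PiM (I - {i}) M) (PiM I M) (\<lambda>(x, X). X(i := x))"
    using distr_pair_PiM_eq_PiM[of "I - {i}" M i] M Mi.prob_space_axioms I by simp
  then have "(\<integral>\<^sup>+\<omega>. f \<omega> \<partial>PiM I M)
      = (\<integral>\<^sup>+\<omega>. f \<omega> \<partial>distr (M i \<Otimes>\<^sub>M PiM (I - {i}) M) (PiM I M) (\<lambda>(x, X). X(i := x)))"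
    by simp
  also have "\<dots> = (\<integral>\<^sup>+p. f ((\<lambda>(x, X). X(i := x)) p) \<partial>(M i \<Otimes>\<^sub>M PiM (I - {i}) M))"
    by (rule nn_integral_distr[OF update_meas]) (use f in simp)
  also have "\<dots> = (\<integral>\<^sup>+X. (\<integral>\<^sup>+x. f (X(i := x)) \<partial>M i) \<partial>PiM (I - {i}) M)"
    using nn_integral_snd[of "\<lambda>p. f ((\<lambda>(x, X). X(i := x)) p)"] measurable_compose[OF update_meas f]
    by simp
  finally show ?thesis .
qed

locale ross_sampling =
  fixes N :: nat and W :: "nat \<Rightarrow> nat \<Rightarrow> real" and D :: "nat \<Rightarrow> 's measure"
    and gradF :: "'x::euclidean_space \<Rightarrow> 's \<Rightarrow> 'x" and Q :: "'s set" and J :: "'s \<Rightarrow> 'x \<Rightarrow> real"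
    and \<gamma> \<alpha> :: real and x0 :: 'x
  assumes Q: "finite Q"
    and J_meas: "\<forall>q\<in>Q. J q \<in> borel_measurable borel"
    and D: "\<forall>i\<in>{1..N}. prob_space (D i)"
    and gradF_meas: "\<forall>i\<in>{1..N}. (\<lambda>(x, \<xi>). gradF x \<xi>) \<in> borel_measurable (borel \<Otimes>\<^sub>M D i)"
begin

definition sample_paths :: "(nat \<times> nat \<Rightarrow> 's) measure" where
  "sample_paths = PiM {(s, i). 1 \<le> s \<and> i \<in> {1..N}} (\<lambda>(s, i). D i)"

definition models :: "(nat \<times> nat \<Rightarrow> 's) \<Rightarrow> nat \<Rightarrow> nat \<Rightarrow> 'x" where
  "models \<xi> s = fst (ross_state N W \<gamma> \<alpha> gradF Q J x0 \<xi> s)"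

lemma prob_space_sample_paths: "prob_space sample_paths"
  unfolding sample_paths_def using D by (intro prob_space_PiM) auto

lemma measurable_sample:
  assumes "1 \<le> s" and "k \<in> {1..N}"
  shows "(\<lambda>\<xi>. \<xi> (s, k)) \<in> measurable sample_paths (D k)"
  using measurable_component_singleton[of "(s, k)" "{(s, i). 1 \<le> s \<and> i \<in> {1..N}}" "\<lambda>(s, i). D i"]
    assms by (simp add: sample_paths_def)

lemma measurable_gradF_sample:
  assumes "f \<in> borel_measurable sample_paths" and "1 \<le> s" and "k \<in> {1..N}"
  shows "(\<lambda>\<xi>. gradF (f \<xi>) (\<xi> (s, k))) \<in> borel_measurable sample_paths"
proof -
  have "(\<lambda>\<xi>. (f \<xi>, \<xi> (s, k))) \<in> measurable sample_paths (borel \<Otimes>\<^sub>M D k)"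
    using assms measurable_sample by (intro measurable_Pair) auto
  from measurable_compose[OF this, of "\<lambda>(x, \<xi>). gradF x \<xi>" borel] gradF_meas assms(3) show ?thesis
    by auto
qed

lemma measurable_ross_state:
  assumes "i \<in> {1..N}"
  shows "(\<lambda>\<xi>. fst (ross_state N W \<gamma> \<alpha> gradF Q J x0 \<xi> s) i) \<in> borel_measurable sample_paths
    \<and> (\<lambda>\<xi>. snd (ross_state N W \<gamma> \<alpha> gradF Q J x0 \<xi> s) i) \<in> borel_measurable sample_paths"
  using assms
proof (induction s arbitrary: i)
  case (Suc s)
  define X where "X \<xi> = fst (ross_state N W \<gamma> \<alpha> gradF Q J x0 \<xi> s)" for \<xi>
  define U where "U \<xi> = snd (ross_state N W \<gamma> \<alpha> gradF Q J x0 \<xi> s)" for \<xi>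
  have X: "(\<lambda>\<xi>. X \<xi> j) \<in> borel_measurable sample_paths"
    and U: "(\<lambda>\<xi>. U \<xi> j) \<in> borel_measurable sample_paths" if "j \<in> {1..N}" for j
    using Suc.IH[OF that] by (simp_all add: X_def U_def)
  have nbhd_sub: "j \<in> {1..N}" if "j \<in> alg_nbhd N W i'" "i' \<in> {1..N}" for i' j
    using that by (auto simp: alg_nbhd_def nbhd_def)
  have G: "(\<lambda>\<xi>. ross_gbar N W \<gamma> gradF Q J (X \<xi>) (\<lambda>k. \<xi> (Suc s, k)) j) \<in> borel_measurable sample_paths"
    if "j \<in> {1..N}" for j
    using that by (intro measurable_ross_gbar[OF Q J_meas] X measurable_gradF_sample) (auto dest: nbhd_sub)
  show ?case
    using X U G Suc.prems
    by (auto simp: ross_step_def Let_def X_def U_def dest!: nbhd_sub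
        intro!: borel_measurable_sum borel_measurable_scaleR borel_measurable_diff borel_measurable_add)
qed simp

lemma measurable_models:
  "i \<in> {1..N} \<Longrightarrow> (\<lambda>\<xi>. models \<xi> s i) \<in> borel_measurable sample_paths"
  using measurable_ross_state by (simp add: models_def)

lemma nn_integral_fresh_sample_le:
  assumes i: "i \<in> {1..N}" and j: "j \<in> {1..N}"
    and h: "h \<in> borel_measurable (borel \<Otimes>\<^sub>M D j)"
    and bound: "\<And>x. (\<integral>\<^sup>+\<xi>. h (x, \<xi>) \<partial>D j) \<le> c"
  shows "(\<integral>\<^sup>+\<omega>. h (models \<omega> s i, \<omega> (Suc s, j)) \<partial>sample_paths) \<le> c"
proof -
  define I where "I = {(s::nat, i). 1 \<le> s \<and> i \<in> {1..N}}"
  define MM where "MM = (\<lambda>(s::nat, i). D i)"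
  define fresh where "fresh = (Suc s, j)"
  have MM: "\<And>k. k \<in> I \<Longrightarrow> prob_space (MM k)"
    using D by (auto simp: I_def MM_def)
  have paths: "sample_paths = PiM I MM"
    by (simp add: sample_paths_def I_def MM_def)
  interpret P0: prob_space "PiM (I - {fresh}) MM"
    using MM by (intro prob_space_PiM) auto
  have "(\<lambda>\<omega>. (models \<omega> s i, \<omega> fresh)) \<in> measurable sample_paths (borel \<Otimes>\<^sub>M D j)"
    using measurable_models[OF i] measurable_sample[OF _ j] by (intro measurable_Pair) (simp_all add: fresh_def)
  with h have meas: "(\<lambda>\<omega>. h (models \<omega> s i, \<omega> fresh)) \<in> borel_measurable (PiM I MM)"
    unfolding paths[symmetric] by measurable
  have "(\<integral>\<^sup>+\<omega>. h (models \<omega> s i, \<omega> fresh) \<partial>PiM I MM)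
      = (\<integral>\<^sup>+X. (\<integral>\<^sup>+x. h (models (X(fresh := x)) s i, x) \<partial>MM fresh) \<partial>PiM (I - {fresh}) MM)"
    using nn_integral_PiM_update[where i = fresh, OF MM _ meas] j by (simp add: I_def fresh_def)
  also have "\<dots> \<le> (\<integral>\<^sup>+X. c \<partial>PiM (I - {fresh}) MM)"
  proof (rule nn_integral_mono)
    fix X
    have "models (X(fresh := x)) s = models X s" for x
      unfolding models_def by (subst ross_state_cong[where \<xi>' = X]) (auto simp: fresh_def)
    then show "(\<integral>\<^sup>+x. h (models (X(fresh := x)) s i, x) \<partial>MM fresh) \<le> c"
      using bound by (simp add: MM_def fresh_def)
  qed
  also have "\<dots> = c"
    by (simp add: P0.emeasure_space_1)
  finally show ?thesis
    by (simp add: paths fresh_def)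
qed

end

locale ross_stochastic =
  ross_problem N W gradf L \<sigma>h + ross_sampling N W D gradF Q J \<gamma> \<alpha> x0
  for N W and gradf :: "nat \<Rightarrow> 'x::euclidean_space \<Rightarrow> 'x" and L \<sigma>h D
    and gradF :: "'x \<Rightarrow> 's \<Rightarrow> 'x" and Q J \<gamma> \<alpha> x0 +
  fixes \<sigma> :: real
  assumes variance: "\<forall>i\<in>{1..N}. \<forall>x.
    (\<integral>\<^sup>+\<xi>. ennreal ((norm (gradF x \<xi> - gradf i x))\<^sup>2) \<partial>D i) \<le> ennreal (\<sigma>\<^sup>2)"
begin

definition sampling_error :: "(nat \<times> nat \<Rightarrow> 's) \<Rightarrow> nat \<Rightarrow> nat \<Rightarrow> nat \<Rightarrow> real" where
  "sampling_error \<xi> s i j = (norm (gradF (models \<xi> s i) (\<xi> (Suc s, j)) - gradf j (models \<xi> s i)))\<^sup>2"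

lemma measurable_sampling_error:
  assumes "i \<in> {1..N}" and "j \<in> {1..N}"
  shows "(\<lambda>\<xi>. ennreal (sampling_error \<xi> s i j)) \<in> borel_measurable sample_paths"
  using measurable_gradF_sample[OF measurable_models[OF assms(1)] _ assms(2)]
    measurable_compose[OF measurable_models[OF assms(1)] gradf_measurable[OF assms(2)]]
  unfolding sampling_error_def by measurable

lemma nn_integral_sampling_error_le:
  assumes i: "i \<in> {1..N}" and j: "j \<in> {1..N}"
  shows "(\<integral>\<^sup>+\<xi>. ennreal (sampling_error \<xi> s i j) \<partial>sample_paths) \<le> ennreal (\<sigma>\<^sup>2)"
proof -
  have "(\<lambda>p. gradF (fst p) (snd p)) \<in> borel_measurable (borel \<Otimes>\<^sub>M D j)"
    using gradF_meas j by (simp add: case_prod_beta')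
  moreover have "(\<lambda>p. gradf j (fst p)) \<in> borel_measurable (borel \<Otimes>\<^sub>M D j)"
    using measurable_fst gradf_measurable[OF j] by (rule measurable_compose)
  ultimately have "(\<lambda>(x, \<xi>). ennreal ((norm (gradF x \<xi> - gradf j x))\<^sup>2)) \<in> borel_measurable (borel \<Otimes>\<^sub>M D j)"
    by (simp add: case_prod_beta')
  with i j variance show ?thesis
    unfolding sampling_error_def
    by (intro nn_integral_fresh_sample_le[where h = "\<lambda>(x, \<xi>). ennreal ((norm (gradF x \<xi> - gradf j x))\<^sup>2)",
        simplified]) auto
qed

lemma nn_integral_sum_sampling_error_le:
  "(\<integral>\<^sup>+\<xi>. (\<Sum>i\<in>{1..N}. \<Sum>j\<in>nbhd N W i. ennreal (sampling_error \<xi> s i j)) \<partial>sample_paths)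
    \<le> ennreal (real N * \<sigma>\<^sup>2 / omega_min N W)"
proof -
  have meas: "(\<lambda>\<xi>. ennreal (sampling_error \<xi> s i j)) \<in> borel_measurable sample_paths"
    if "i \<in> {1..N}" "j \<in> nbhd N W i" for i j
    using that by (intro measurable_sampling_error) (simp_all add: nbhd_def)
  have "(\<integral>\<^sup>+\<xi>. (\<Sum>i\<in>{1..N}. \<Sum>j\<in>nbhd N W i. ennreal (sampling_error \<xi> s i j)) \<partial>sample_paths)
      = (\<Sum>i\<in>{1..N}. \<integral>\<^sup>+\<xi>. (\<Sum>j\<in>nbhd N W i. ennreal (sampling_error \<xi> s i j)) \<partial>sample_paths)"
    by (rule nn_integral_sum) (intro borel_measurable_sum meas)
  also have "\<dots> = (\<Sum>i\<in>{1..N}. \<Sum>j\<in>nbhd N W i. \<integral>\<^sup>+\<xi>. ennreal (sampling_error \<xi> s i j) \<partial>sample_paths)"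
    by (intro sum.cong refl nn_integral_sum meas)
  also have "\<dots> \<le> (\<Sum>i\<in>{1..N}. \<Sum>j\<in>nbhd N W i. ennreal (\<sigma>\<^sup>2))"
    by (intro sum_mono nn_integral_sampling_error_le) (simp_all add: nbhd_def)
  also have "\<dots> = ennreal (\<Sum>i\<in>{1..N}. real (card (nbhd N W i)) * \<sigma>\<^sup>2)"
    by (simp add: ennreal_mult ennreal_of_nat_eq_real_of_nat flip: sum_ennreal)
  also have "\<dots> \<le> ennreal (real N * \<sigma>\<^sup>2 / omega_min N W)"
  proof (rule ennreal_leI)
    have "real (card (nbhd N W i)) * \<sigma>\<^sup>2 \<le> \<sigma>\<^sup>2 / omega_min N W" if "i \<in> {1..N}" for i
      using mult_right_mono[OF card_nbhd_le[OF that], of "\<sigma>\<^sup>2"] by simp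
    then show "(\<Sum>i\<in>{1..N}. real (card (nbhd N W i)) * \<sigma>\<^sup>2) \<le> real N * \<sigma>\<^sup>2 / omega_min N W"
      using sum_mono[of "{1..N}" "\<lambda>i. real (card (nbhd N W i)) * \<sigma>\<^sup>2" "\<lambda>_. \<sigma>\<^sup>2 / omega_min N W"] by simp
  qed
  finally show ?thesis .
qed

lemma ennreal_power2_norm_avg_ross_gbar_le:
  defines "w \<equiv> omega_min N W"
  shows "ennreal ((norm (avg N (ross_gbar N W \<gamma> gradF Q J (models \<xi> s) (\<lambda>j. \<xi> (Suc s, j)))))\<^sup>2)
    \<le> ennreal (2 / (real N * w\<^sup>2)) * (\<Sum>i\<in>{1..N}. \<Sum>j\<in>nbhd N W i. ennreal (sampling_error \<xi> s i j))
      + ennreal (8 * \<sigma>h\<^sup>2 / w ^ 3)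
      + ennreal (16 * L\<^sup>2 / (real N * w ^ 3))
        * (\<Sum>i\<in>{1..N}. ennreal ((norm (models \<xi> s i - avg N (models \<xi> s)))\<^sup>2))
      + ennreal (8 / w ^ 3) * ennreal ((norm (avg N (\<lambda>k. gradf k (models \<xi> s k))))\<^sup>2)"
proof -
  define X where "X = (\<Sum>i\<in>{1..N}. \<Sum>j\<in>nbhd N W i. sampling_error \<xi> s i j)"
  define Y where "Y = (\<Sum>i\<in>{1..N}. (norm (models \<xi> s i - avg N (models \<xi> s)))\<^sup>2)"
  have nonneg: "0 \<le> X" "0 \<le> Y" "0 < w"
    using omega_min_pos by (simp_all add: X_def Y_def w_def sampling_error_def sum_nonneg)
  have "ennreal ((norm (avg N (ross_gbar N W \<gamma> gradF Q J (models \<xi> s) (\<lambda>j. \<xi> (Suc s, j)))))\<^sup>2)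
      \<le> ennreal (2 / (real N * w\<^sup>2) * X + 8 * \<sigma>h\<^sup>2 / w ^ 3 + 16 * L\<^sup>2 / (real N * w ^ 3) * Y
          + 8 / w ^ 3 * (norm (avg N (\<lambda>k. gradf k (models \<xi> s k))))\<^sup>2)"
    using power2_norm_avg_ross_gbar_le[of \<gamma> gradF Q J "models \<xi> s" "\<lambda>j. \<xi> (Suc s, j)"]
    by (intro ennreal_leI) (simp add: X_def Y_def w_def sampling_error_def)
  also have "\<dots> = ennreal (2 / (real N * w\<^sup>2)) * ennreal X + ennreal (8 * \<sigma>h\<^sup>2 / w ^ 3)
      + ennreal (16 * L\<^sup>2 / (real N * w ^ 3)) * ennreal Y
      + ennreal (8 / w ^ 3) * ennreal ((norm (avg N (\<lambda>k. gradf k (models \<xi> s k))))\<^sup>2)"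
    using nonneg by (simp add: ennreal_plus flip: ennreal_mult)
  also have "ennreal X = (\<Sum>i\<in>{1..N}. \<Sum>j\<in>nbhd N W i. ennreal (sampling_error \<xi> s i j))"
    by (simp add: X_def sampling_error_def sum_nonneg)
  also have "ennreal Y = (\<Sum>i\<in>{1..N}. ennreal ((norm (models \<xi> s i - avg N (models \<xi> s)))\<^sup>2))"
    by (simp add: Y_def sum_nonneg)
  finally show ?thesis .
qed

lemma nn_integral_avg_ross_gbar_le:
  defines "w \<equiv> omega_min N W"
  shows "(\<integral>\<^sup>+\<xi>. ennreal ((norm (avg N (ross_gbar N W \<gamma> gradF Q J (models \<xi> s) (\<lambda>j. \<xi> (Suc s, j)))))\<^sup>2)
      \<partial>sample_paths)
    \<le> ennreal (2 * \<sigma>\<^sup>2 / w ^ 3 + 8 * \<sigma>h\<^sup>2 / w ^ 3)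
      + ennreal (16 * L\<^sup>2 / (real N * w ^ 3))
        * (\<Sum>i\<in>{1..N}. \<integral>\<^sup>+\<xi>. ennreal ((norm (models \<xi> s i - avg N (models \<xi> s)))\<^sup>2) \<partial>sample_paths)
      + ennreal (8 / w ^ 3)
        * (\<integral>\<^sup>+\<xi>. ennreal ((norm (avg N (\<lambda>k. gradf k (models \<xi> s k))))\<^sup>2) \<partial>sample_paths)"
proof -
  interpret prob_space sample_paths
    by (rule prob_space_sample_paths)
  define errors where "errors \<xi> = (\<Sum>i\<in>{1..N}. \<Sum>j\<in>nbhd N W i. ennreal (sampling_error \<xi> s i j))" for \<xi>
  define dev where "dev \<xi> i = ennreal ((norm (models \<xi> s i - avg N (models \<xi> s)))\<^sup>2)" for \<xi> i
  define grad where "grad \<xi> = ennreal ((norm (avg N (\<lambda>k. gradf k (models \<xi> s k))))\<^sup>2)" for \<xi>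
  have errors_meas: "errors \<in> borel_measurable sample_paths"
    unfolding errors_def using measurable_sampling_error
    by (intro borel_measurable_sum) (simp add: nbhd_def)
  have dev_meas: "(\<lambda>\<xi>. dev \<xi> i) \<in> borel_measurable sample_paths" if "i \<in> {1..N}" for i
    using that measurable_models unfolding dev_def avg_def by measurable
  have grad_meas: "grad \<in> borel_measurable sample_paths"
    using measurable_compose[OF measurable_models gradf_measurable]
    unfolding grad_def avg_def by measurable
  have dev_sum: "(\<integral>\<^sup>+\<xi>. (\<Sum>i\<in>{1..N}. dev \<xi> i) \<partial>sample_paths) = (\<Sum>i\<in>{1..N}. \<integral>\<^sup>+\<xi>. dev \<xi> i \<partial>sample_paths)"
    by (rule nn_integral_sum) (rule dev_meas)
  have "(\<integral>\<^sup>+\<xi>. ennreal ((norm (avg N (ross_gbar N W \<gamma> gradF Q J (models \<xi> s) (\<lambda>j. \<xi> (Suc s, j)))))\<^sup>2)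
      \<partial>sample_paths)
      \<le> (\<integral>\<^sup>+\<xi>. ennreal (2 / (real N * w\<^sup>2)) * errors \<xi> + ennreal (8 * \<sigma>h\<^sup>2 / w ^ 3)
        + ennreal (16 * L\<^sup>2 / (real N * w ^ 3)) * (\<Sum>i\<in>{1..N}. dev \<xi> i)
        + ennreal (8 / w ^ 3) * grad \<xi> \<partial>sample_paths)"
    unfolding errors_def dev_def grad_def w_def
    by (rule nn_integral_mono) (rule ennreal_power2_norm_avg_ross_gbar_le)
  also have "\<dots> = ennreal (2 / (real N * w\<^sup>2)) * (\<integral>\<^sup>+\<xi>. errors \<xi> \<partial>sample_paths) + ennreal (8 * \<sigma>h\<^sup>2 / w ^ 3)
      + ennreal (16 * L\<^sup>2 / (real N * w ^ 3)) * (\<Sum>i\<in>{1..N}. \<integral>\<^sup>+\<xi>. dev \<xi> i \<partial>sample_paths)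
      + ennreal (8 / w ^ 3) * (\<integral>\<^sup>+\<xi>. grad \<xi> \<partial>sample_paths)"
    using dev_sum errors_meas dev_meas grad_meas
    by (simp add: nn_integral_add nn_integral_cmult emeasure_space_1 borel_measurable_sum)
  also have "\<dots> \<le> ennreal (2 / (real N * w\<^sup>2)) * ennreal (real N * \<sigma>\<^sup>2 / w) + ennreal (8 * \<sigma>h\<^sup>2 / w ^ 3)
      + ennreal (16 * L\<^sup>2 / (real N * w ^ 3)) * (\<Sum>i\<in>{1..N}. \<integral>\<^sup>+\<xi>. dev \<xi> i \<partial>sample_paths)
      + ennreal (8 / w ^ 3) * (\<integral>\<^sup>+\<xi>. grad \<xi> \<partial>sample_paths)"
    using nn_integral_sum_sampling_error_le[of s]
    by (intro add_mono mult_left_mono order_refl) (simp_all add: errors_def w_def)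
  also have "ennreal (2 / (real N * w\<^sup>2)) * ennreal (real N * \<sigma>\<^sup>2 / w) + ennreal (8 * \<sigma>h\<^sup>2 / w ^ 3)
      = ennreal (2 * \<sigma>\<^sup>2 / w ^ 3 + 8 * \<sigma>h\<^sup>2 / w ^ 3)"
    using N_pos omega_min_pos
    by (simp add: w_def ennreal_plus flip: ennreal_mult) (simp add: field_simps power2_eq_square power3_eq_cube)
  finally show ?thesis
    by (simp add: dev_def grad_def)
qed

end

lemma cube_bound_le_fourth_power_bound:
  fixes w \<sigma> \<sigma>h L :: real and S G :: ennreal
  assumes w: "0 < w" "w \<le> 1"
  shows "ennreal (2 * \<sigma>\<^sup>2 / w ^ 3 + 8 * \<sigma>h\<^sup>2 / w ^ 3) + ennreal (16 * L\<^sup>2 / (real N * w ^ 3)) * S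
      + ennreal (8 / w ^ 3) * G
    \<le> ennreal (4 * \<sigma>\<^sup>2 / w ^ 4) + ennreal (6 * \<sigma>\<^sup>2 / real N) + ennreal (16 * \<sigma>h\<^sup>2 / w ^ 4)
      + ennreal (32 * L\<^sup>2 / (real N * w ^ 4)) * S + ennreal (16 / w ^ 4 + 6) * G"
proof (intro add_mono mult_right_mono ennreal_leI order_refl)
  have weaken: "c / w ^ 3 \<le> c / w ^ 4" if "0 \<le> c" for c
    using w that by (rule divide_power_le_divide_power) simp
  have "\<sigma>\<^sup>2 / w ^ 3 \<le> \<sigma>\<^sup>2 / w ^ 4" "\<sigma>h\<^sup>2 / w ^ 3 \<le> \<sigma>h\<^sup>2 / w ^ 4"
    "0 \<le> \<sigma>\<^sup>2 / w ^ 4" "0 \<le> \<sigma>h\<^sup>2 / w ^ 4" "0 \<le> \<sigma>\<^sup>2 / real N"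
    using weaken w by simp_all
  then have "2 * \<sigma>\<^sup>2 / w ^ 3 + 8 * \<sigma>h\<^sup>2 / w ^ 3
      \<le> 4 * \<sigma>\<^sup>2 / w ^ 4 + 6 * \<sigma>\<^sup>2 / real N + 16 * \<sigma>h\<^sup>2 / w ^ 4"
    unfolding times_divide_eq_right[symmetric] by linarith
  then show "ennreal (2 * \<sigma>\<^sup>2 / w ^ 3 + 8 * \<sigma>h\<^sup>2 / w ^ 3)
      \<le> ennreal (4 * \<sigma>\<^sup>2 / w ^ 4) + ennreal (6 * \<sigma>\<^sup>2 / real N) + ennreal (16 * \<sigma>h\<^sup>2 / w ^ 4)"
    by (simp flip: ennreal_plus add: ennreal_leI)
  have "16 * L\<^sup>2 / (real N * w ^ 3) \<le> 16 * L\<^sup>2 / (real N * w ^ 4)"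
    using weaken[of "16 * L\<^sup>2 / real N"] by simp
  also have "\<dots> \<le> 32 * L\<^sup>2 / (real N * w ^ 4)"
    using w by (intro divide_right_mono) simp_all
  finally show "16 * L\<^sup>2 / (real N * w ^ 3) \<le> 32 * L\<^sup>2 / (real N * w ^ 4)" .
  have "8 / w ^ 3 \<le> 8 / w ^ 4" "8 / w ^ 4 \<le> 16 / w ^ 4"
    using weaken[of 8] w by (simp_all add: divide_right_mono)
  then show "8 / w ^ 3 \<le> 16 / w ^ 4 + 6"
    by linarith
qed simp_all

theorem lemma4:
  fixes N :: nat and W :: "nat \<Rightarrow> nat \<Rightarrow> real"
    and D :: "nat \<Rightarrow> 's measure"
    and F :: "'x::euclidean_space \<Rightarrow> 's \<Rightarrow> real" and gradF :: "'x \<Rightarrow> 's \<Rightarrow> 'x"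
    and f :: "nat \<Rightarrow> 'x \<Rightarrow> real" and gradf :: "nat \<Rightarrow> 'x \<Rightarrow> 'x"
    and Q :: "'s set" and J :: "'s \<Rightarrow> 'x \<Rightarrow> real"
    and \<gamma> \<alpha> L \<sigma> \<sigma>h \<rho> :: real and x0 :: 'x and t :: nat
  assumes N: "1 \<le> N"
    and W_range: "\<forall>i\<in>{1..N}. \<forall>j\<in>{1..N}. 0 \<le> W i j \<and> W i j \<le> 1"
    and W_sym: "\<forall>i\<in>{1..N}. \<forall>j\<in>{1..N}. W i j = W j i"
    and W_stoch: "\<forall>i\<in>{1..N}. (\<Sum>j\<in>{1..N}. W i j) = 1"
    and \<gamma>: "0 < \<gamma>"
    and Q: "finite Q"
    and D: "\<forall>i\<in>{1..N}. prob_space (D i)"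
    and gradF: "\<forall>x \<xi>. ((\<lambda>y. F y \<xi>) has_derivative (\<lambda>h. gradF x \<xi> \<bullet> h)) (at x)"
    and gradF_meas: "\<forall>i\<in>{1..N}. (\<lambda>(x, \<xi>). gradF x \<xi>) \<in> borel_measurable (borel \<Otimes>\<^sub>M D i)"
    and J_meas: "\<forall>q\<in>Q. J q \<in> borel_measurable borel"
    and f_def: "\<forall>i\<in>{1..N}. \<forall>x. integrable (D i) (F x) \<and> f i x = (\<integral>\<xi>. F x \<xi> \<partial>D i)"
    and gradf: "\<forall>i\<in>{1..N}. \<forall>x. (f i has_derivative (\<lambda>h. gradf i x \<bullet> h)) (at x)"
    and A1: "\<forall>i\<in>{1..N}. \<forall>x y. norm (gradf i x - gradf i y) \<le> L * norm (x - y)"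
    and A2_pos: "0 < \<sigma>" "0 < \<sigma>h"
    and A2_var: "\<forall>i\<in>{1..N}. \<forall>x.
        (\<integral>\<^sup>+\<xi>. ennreal ((norm (gradF x \<xi> - gradf i x))\<^sup>2) \<partial>D i) \<le> ennreal (\<sigma>\<^sup>2)"
    and A2_het: "\<forall>i\<in>{1..N}. \<forall>x.
        (norm (gradf i x - (1 / real N) *\<^sub>R (\<Sum>k\<in>{1..N}. gradf k x)))\<^sup>2 \<le> \<sigma>h\<^sup>2"
    and A3: "\<rho> < 1" "spectral_gap N W \<rho>"
    and t: "1 \<le> t"
  shows
   "let M = PiM {(s, i). 1 \<le> s \<and> i \<in> {1..N}} (\<lambda>(s, i). D i);
        X = (\<lambda>\<xi> s. fst (ross_state N W \<gamma> \<alpha> gradF Q J x0 \<xi> s));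
        Xbar = (\<lambda>\<xi> s. (1 / real N) *\<^sub>R (\<Sum>i\<in>{1..N}. X \<xi> s i));
        gbar = (\<lambda>\<xi>. ross_gbar N W \<gamma> gradF Q J (X \<xi> (t - 1)) (\<lambda>j. \<xi> (t, j)));
        wm = omega_min N W
    in (\<integral>\<^sup>+\<xi>. ennreal ((norm ((1 / real N) *\<^sub>R (\<Sum>i\<in>{1..N}. gbar \<xi> i)))\<^sup>2) \<partial>M)
       \<le> ennreal (4 * \<sigma>\<^sup>2 / wm ^ 4) + ennreal (6 * \<sigma>\<^sup>2 / real N)
         + ennreal (16 * \<sigma>h\<^sup>2 / wm ^ 4)
         + ennreal (32 * L\<^sup>2 / (real N * wm ^ 4))
             * (\<Sum>i\<in>{1..N}. \<integral>\<^sup>+\<xi>. ennreal ((norm (X \<xi> (t - 1) i - Xbar \<xi> (t - 1)))\<^sup>2) \<partial>M)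
         + ennreal (16 / wm ^ 4 + 6)
             * (\<integral>\<^sup>+\<xi>. ennreal ((norm ((1 / real N) *\<^sub>R
                   (\<Sum>i\<in>{1..N}. gradf i (X \<xi> (t - 1) i))))\<^sup>2) \<partial>M)"
proof -
  interpret ross_stochastic N W gradf L \<sigma>h D gradF Q J \<gamma> \<alpha> x0 \<sigma>
    by unfold_locales (fact N W_range W_stoch A1 A2_het Q J_meas D gradF_meas A2_var)+
  have w: "0 < omega_min N W" "omega_min N W \<le> 1"
    by (rule omega_min_pos, rule omega_min_le_one)
  from order_trans[OF nn_integral_avg_ross_gbar_le[of "t - 1"] cube_bound_le_fourth_power_bound[OF w]]
  show ?thesis
    using t by (simp add: Let_def sample_paths_def models_def avg_def)
qed

end
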